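(* Let $\Omega\subset\mathbb{R}^n$ be a bounded open set, $A\subset\Omega$ a non-empty open set, and $\lambda>0$. Let $f(x)=\mathrm{dist}^2(x,A^c)$ and let $f^{-}_{\overline\Omega}:\overline\Omega\to\mathbb{R}$ equal $f$ on $\Omega$ and $\inf_\Omega f$ on $\partial\Omega$. Then for every $x\in\overline\Omega$, $$\mathcal{M}(\lambda;A^c)(x)=(1+\lambda)\Big(f^{-}_{\overline\Omega}(x)-C^l_{\lambda,\Omega}(f^{-}_{\overline\Omega})(x)\Big).$$
   Context: $A^c=\mathbb{R}^n\setminus A$; $\mathrm{dist}(x,B)=\inf_{y\in B}|x-y|$. For a nonempty closed set $F$, $\mathcal{M}(\lambda;F)(x)=(1+\lambda)\big(\mathrm{dist}^2(x;F)-C^l_\lambda(\mathrm{dist}^2(\cdot;F))(x)\big)$ for $x\in\mathbb{R}^n$, where $C^l_\lambda(g)(x)=\mathrm{co}[g+\lambda|\cdot|^2](x)-\lambda|x|^2$ and $\mathrm{co}$ is the convex envelope. For bounded $g:\overline\Omega\to\mathbb{R}$ and $x\in\overline\Omega$: $M_{\lambda,\Omega}(g)(x)=\inf_{y\in\overline\Omega}\{g(y)+\lambda|y-x|^2\}$, $M^{\lambda}_{\Omega}(g)(x)=\sup_{y\in\overline\Omega}\{g(y)-\lambda|y-x|^2\}$, and $C^l_{\lambda,\Omega}(g)(x)=M^{\lambda}_{\Omega}(M_{\lambda,\Omega}(g))(x)$. *)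

theory Defs
  imports "HOL-Analysis.Analysis"
begin

definition conv_env :: "('a::euclidean_space \<Rightarrow> real) \<Rightarrow> 'a \<Rightarrow> real" where
  "conv_env g x = (SUP h \<in> {h. convex_on UNIV h \<and> (\<forall>y. h y \<le> g y)}. h x)"

definition lower_comp :: "real \<Rightarrow> ('a::euclidean_space \<Rightarrow> real) \<Rightarrow> 'a \<Rightarrow> real" where
  "lower_comp lam g x = conv_env (\<lambda>y. g y + lam * (norm y)\<^sup>2) x - lam * (norm x)\<^sup>2"

definition dist2 :: "'a::euclidean_space set \<Rightarrow> 'a \<Rightarrow> real" where
  "dist2 F x = (infdist x F)\<^sup>2"

definition Mtrans :: "real \<Rightarrow> 'a::euclidean_space set \<Rightarrow> 'a \<Rightarrow> real" where
  "Mtrans lam F x = (1 + lam) * (dist2 F x - lower_comp lam (dist2 F) x)"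

definition lower_env :: "real \<Rightarrow> 'a::euclidean_space set \<Rightarrow> ('a \<Rightarrow> real) \<Rightarrow> 'a \<Rightarrow> real" where
  "lower_env lam \<Omega> g x = (INF y \<in> closure \<Omega>. g y + lam * (norm (y - x))\<^sup>2)"

definition upper_env :: "real \<Rightarrow> 'a::euclidean_space set \<Rightarrow> ('a \<Rightarrow> real) \<Rightarrow> 'a \<Rightarrow> real" where
  "upper_env lam \<Omega> g x = (SUP y \<in> closure \<Omega>. g y - lam * (norm (y - x))\<^sup>2)"

definition lower_comp_dom :: "real \<Rightarrow> 'a::euclidean_space set \<Rightarrow> ('a \<Rightarrow> real) \<Rightarrow> 'a \<Rightarrow> real" where
  "lower_comp_dom lam \<Omega> g x = upper_env lam \<Omega> (lower_env lam \<Omega> g) x"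

end

theory Submission imports Defs begin

(* The convex envelope of g + lam |.|^2 is the supremum of its affine minorants, and completing
   the square turns the affine function <a,u> + b into c + lam |u|^2 - lam |u - y|^2 with
   y = a / (2 lam).  Such a function minorizes g + lam |.|^2 iff c is at most the Moreau envelope
   inf_z (g z + lam |z - y|^2), so C^l_lam(g) = M^lam(M_lam(g)) with both envelopes taken over the
   whole space.  When g \<ge> 0 vanishes off Omega, as dist^2(., A^c) does, the envelopes may be
   restricted to the closure of Omega: a minimizer z outside the closure can be replaced by the
   boundary point on the segment from y to z, which is nearer to y and has g = 0.  Finally the
   infimum of g over Omega is its value 0 at a boundary point, so the modified function is g. *)

lemma convex_on_affine: "convex_on UNIV (\<lambda>u::'a::real_inner. c + inner a u)"
  unfolding convex_on_def
proof (intro conjI ballI allI impI)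
  fix x y :: 'a and u v :: real assume "u + v = 1"
  then have "c = u * c + v * c" by (metis distrib_right mult_1)
  then show "c + inner a (u *\<^sub>R x + v *\<^sub>R y) \<le> u * (c + inner a x) + v * (c + inner a y)"
    by (simp add: inner_add_right distrib_left)
qed simp

lemma convex_on_affine_minorant_approx:
  fixes h :: "'a::euclidean_space \<Rightarrow> real"
  assumes cv: "convex_on UNIV h" and e: "e > 0"
  shows "\<exists>a b. (\<forall>u. inner a u + b \<le> h u) \<and> h x - e < inner a x + b"
proof -
  let ?S = "epigraph UNIV h"
  have "convex ?S" using cv by (rule convex_epigraphI)
  have cont: "continuous_on UNIV h" using convex_on_continuous[OF open_UNIV cv] .
  have "closed {p :: 'a \<times> real. h (fst p) \<le> snd p}"
    by (intro closed_Collect_le continuous_on_compose2[OF cont] continuous_intros) auto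
  moreover have "?S = {p. h (fst p) \<le> snd p}" by (auto simp: epigraph_def)
  ultimately have "closed ?S" by simp
  have "(x, h x - e) \<notin> ?S" using e by (simp add: mem_epigraph)
  from separating_hyperplane_closed_point[OF \<open>convex ?S\<close> \<open>closed ?S\<close> this]
  obtain q b where below: "inner q (x, h x - e) < b" and above: "\<forall>p\<in>?S. inner q p > b"
    by blast
  obtain a t where q: "q = (a, t)" by (cases q)
  have above': "inner a u + t * h u > b" for u
    using above[rule_format, of "(u, h u)"] by (simp add: q mem_epigraph)
  have below': "inner a x + t * (h x - e) < b" using below by (simp add: q)
  with above'[of x] have "t * e > 0" by (simp add: algebra_simps)
  with e have t: "t > 0" by (simp add: zero_less_mult_iff)
  show ?thesis
  proof (intro exI conjI allI)
    fix u
    have "(b - inner a u) / t < h u"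
      using above'[of u] t by (simp add: divide_less_eq mult.commute)
    then show "inner (- (1/t) *\<^sub>R a) u + b / t \<le> h u"
      by (simp add: diff_divide_distrib)
  next
    have "h x - e < (b - inner a x) / t"
      using below' t by (simp add: less_divide_eq mult.commute)
    then show "h x - e < inner (- (1/t) *\<^sub>R a) x + b / t"
      by (simp add: diff_divide_distrib)
  qed
qed

lemma norm_sq_diff_sq:
  fixes u y :: "'a::real_inner"
  shows "lam * (norm u)\<^sup>2 - lam * (norm (u - y))\<^sup>2 = inner ((2 * lam) *\<^sub>R y) u - lam * (norm y)\<^sup>2"
  by (simp add: power2_norm_eq_inner inner_diff_left inner_diff_right inner_commute algebra_simps)

context
  fixes g :: "'a::euclidean_space \<Rightarrow> real" and m lam :: real
  assumes lower_bound: "\<And>z. m \<le> g z" and lam_pos: "lam > 0"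
begin

lemma bdd_below_lower_env_terms: "bdd_below ((\<lambda>z. g z + lam * (norm (z - y))\<^sup>2) ` Z)"
  using lower_bound lam_pos by (intro bdd_belowI[of _ m]) (auto intro: add_increasing2)

lemma lower_env_UNIV_le: "lower_env lam UNIV g y \<le> g z + lam * (norm (z - y))\<^sup>2"
  unfolding lower_env_def closure_UNIV by (rule cINF_lower[OF bdd_below_lower_env_terms]) simp

lemma lower_env_UNIV_ge: "m \<le> lower_env lam UNIV g y"
  unfolding lower_env_def closure_UNIV
  using lower_bound lam_pos by (intro cINF_greatest) (auto intro: add_increasing2)

lemma bdd_above_upper_env_terms:
  "bdd_above ((\<lambda>y. lower_env lam UNIV g y - lam * (norm (y - x))\<^sup>2) ` Y)"
proof (rule bdd_aboveI2)
  fix y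
  show "lower_env lam UNIV g y - lam * (norm (y - x))\<^sup>2 \<le> g x"
    using lower_env_UNIV_le[of y x] by (simp add: norm_minus_commute)
qed

lemma lower_comp_dom_UNIV_ge:
  "lower_env lam UNIV g y - lam * (norm (y - x))\<^sup>2 \<le> lower_comp_dom lam UNIV g x"
  unfolding lower_comp_dom_def upper_env_def closure_UNIV
  by (rule cSUP_upper[OF _ bdd_above_upper_env_terms]) simp

lemma convex_minorant_le_lower_comp_dom:
  assumes cv: "convex_on UNIV h"
    and below: "\<And>u. h u \<le> g u + lam * (norm u)\<^sup>2"
  shows "h x \<le> lower_comp_dom lam UNIV g x + lam * (norm x)\<^sup>2"
proof (rule field_le_epsilon)
  fix e :: real assume "e > 0"
  from convex_on_affine_minorant_approx[OF cv this, of x] obtain a b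
    where affine_below: "\<forall>u. inner a u + b \<le> h u" and close: "h x - e < inner a x + b"
    by blast
  define y where "y = (1 / (2 * lam)) *\<^sub>R a"
  have a: "(2 * lam) *\<^sub>R y = a" using lam_pos by (simp add: y_def)
  define c where "c = b + lam * (norm y)\<^sup>2"
  have affine_eq: "inner a u + b = c + lam * (norm u)\<^sup>2 - lam * (norm (u - y))\<^sup>2" for u
    using norm_sq_diff_sq[of lam u y, unfolded a] unfolding c_def by linarith
  have "c \<le> lower_env lam UNIV g y" unfolding lower_env_def closure_UNIV
  proof (rule cINF_greatest)
    fix z
    show "c \<le> g z + lam * (norm (z - y))\<^sup>2"
      using affine_below[rule_format, of z] below[of z] affine_eq[of z] by linarith
  qed simp
  with lower_comp_dom_UNIV_ge[of y x]
  have "inner a x + b \<le> lower_comp_dom lam UNIV g x + lam * (norm x)\<^sup>2" by (simp add: affine_eq norm_minus_commute)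
  with close show "h x \<le> lower_comp_dom lam UNIV g x + lam * (norm x)\<^sup>2 + e" by simp
qed

lemma lower_comp_eq_lower_comp_dom_UNIV:
  shows "lower_comp lam g x = lower_comp_dom lam UNIV g x"
proof -
  define H where "H = {h. convex_on UNIV h \<and> (\<forall>u. h u \<le> g u + lam * (norm u)\<^sup>2)}"
  have env: "conv_env (\<lambda>u. g u + lam * (norm u)\<^sup>2) x = (SUP h\<in>H. h x)"
    unfolding conv_env_def H_def ..
  have "(\<lambda>_. m) \<in> H"
    unfolding H_def using lower_bound lam_pos by (auto simp: convex_on_const intro: add_increasing2)
  then have H_ne: "H \<noteq> {}" by blast
  have H_bdd: "bdd_above ((\<lambda>h. h x) ` H)"
    unfolding H_def by (intro bdd_aboveI[of _ "g x + lam * (norm x)\<^sup>2"]) auto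
  have "(SUP h\<in>H. h x) \<le> lower_comp_dom lam UNIV g x + lam * (norm x)\<^sup>2"
    using H_ne by (rule cSUP_least) (simp add: H_def convex_minorant_le_lower_comp_dom)
  moreover have "lower_comp_dom lam UNIV g x \<le> (SUP h\<in>H. h x) - lam * (norm x)\<^sup>2"
    unfolding lower_comp_dom_def upper_env_def closure_UNIV
  proof (rule cSUP_least)
    fix y
    define q where "q u = (lower_env lam UNIV g y - lam * (norm y)\<^sup>2) + inner ((2 * lam) *\<^sub>R y) u" for u
    have q_eq: "q u = lower_env lam UNIV g y - lam * (norm (u - y))\<^sup>2 + lam * (norm u)\<^sup>2" for u
      using norm_sq_diff_sq[of lam u y] by (simp add: q_def)
    have "q \<in> H" unfolding H_def
    proof (intro CollectI conjI allI)
      show "convex_on UNIV q" unfolding q_def by (rule convex_on_affine)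
      show "q u \<le> g u + lam * (norm u)\<^sup>2" for u
        using lower_env_UNIV_le[of y u] by (simp add: q_eq)
    qed
    then have "q x \<le> (SUP h\<in>H. h x)" by (rule cSUP_upper[OF _ H_bdd])
    then show "lower_env lam UNIV g y - lam * (norm (y - x))\<^sup>2 \<le> (SUP h\<in>H. h x) - lam * (norm x)\<^sup>2"
      by (simp add: q_eq norm_minus_commute)
  qed simp
  ultimately show ?thesis unfolding lower_comp_def env by simp
qed

end

lemma closure_frontier_point_between:
  fixes \<Omega> :: "'a::euclidean_space set"
  assumes "open \<Omega>" and y: "y \<in> closure \<Omega>" and z: "z \<notin> closure \<Omega>"
  obtains w where "w \<in> closure \<Omega>" "w \<notin> \<Omega>" "dist w y \<le> dist z y"
proof -
  have "closed_segment y z \<inter> frontier (closure \<Omega>) \<noteq> {}"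
    by (rule connected_Int_frontier) (use y z in auto)
  then obtain w where seg: "w \<in> closed_segment y z" and fr: "w \<in> frontier (closure \<Omega>)" by blast
  have "\<Omega> \<subseteq> interior (closure \<Omega>)"
    using \<open>open \<Omega>\<close> by (simp add: interior_maximal closure_subset)
  with fr have "w \<in> closure \<Omega>" "w \<notin> \<Omega>" by (auto simp: frontier_def)
  moreover have "dist w y \<le> dist z y"
    using dist_in_closed_segment[OF seg] by (simp add: dist_commute)
  ultimately show thesis by (rule that)
qed

context
  fixes g :: "'a::euclidean_space \<Rightarrow> real" and \<Omega> :: "'a set" and lam :: real
  assumes nonneg: "\<And>z. 0 \<le> g z" and lam_pos: "lam > 0" and "open \<Omega>"
    and vanishes: "\<And>z. z \<notin> \<Omega> \<Longrightarrow> g z = 0"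
begin

lemma lower_env_closure_eq_UNIV:
  assumes y: "y \<in> closure \<Omega>"
  shows "lower_env lam \<Omega> g y = lower_env lam UNIV g y"
proof (rule antisym)
  have "\<exists>w\<in>closure \<Omega>. g w + lam * (norm (w - y))\<^sup>2 \<le> g z + lam * (norm (z - y))\<^sup>2" for z
  proof (cases "z \<in> closure \<Omega>")
    case False
    with closure_frontier_point_between[OF \<open>open \<Omega>\<close> y]
    obtain w where "w \<in> closure \<Omega>" "w \<notin> \<Omega>" "norm (w - y) \<le> norm (z - y)"
      by (metis dist_norm)
    moreover from this have "lam * (norm (w - y))\<^sup>2 \<le> lam * (norm (z - y))\<^sup>2"
      using lam_pos by (intro mult_left_mono power_mono) auto
    ultimately show ?thesis using vanishes nonneg[of z] by (intro bexI[of _ w]) auto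
  qed auto
  then show "lower_env lam \<Omega> g y \<le> lower_env lam UNIV g y"
    unfolding lower_env_def closure_UNIV
    by (intro cINF_mono bdd_below_lower_env_terms[where g=g and m=0, OF nonneg lam_pos]) auto
  show "lower_env lam UNIV g y \<le> lower_env lam \<Omega> g y"
    unfolding lower_env_def closure_UNIV using y
    by (intro cINF_superset_mono bdd_below_lower_env_terms[where g=g and m=0, OF nonneg lam_pos]) auto
qed

lemma lower_comp_dom_closure_eq_UNIV:
  assumes x: "x \<in> closure \<Omega>"
  shows "lower_comp_dom lam \<Omega> g x = lower_comp_dom lam UNIV g x"
proof -
  let ?t = "\<lambda>y. lower_env lam UNIV g y - lam * (norm (y - x))\<^sup>2"
  note bdd = bdd_above_upper_env_terms[where g=g and m=0, OF nonneg lam_pos]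
  have "lower_comp_dom lam \<Omega> g x = (SUP y\<in>closure \<Omega>. ?t y)"
    unfolding lower_comp_dom_def upper_env_def
    by (rule SUP_cong) (auto simp: lower_env_closure_eq_UNIV)
  moreover have "(SUP y\<in>closure \<Omega>. ?t y) = (SUP y. ?t y)"
  proof (rule antisym)
    show "(SUP y\<in>closure \<Omega>. ?t y) \<le> (SUP y. ?t y)"
      using x by (intro cSUP_subset_mono bdd) auto
    \<comment> \<open>outside the closure the envelope vanishes, so those terms are dominated by the one at x\<close>
    have dominated: "?t y \<le> ?t x" if "y \<notin> closure \<Omega>" for y
    proof -
      have "y \<notin> \<Omega>" using that closure_subset by auto
      then have "lower_env lam UNIV g y \<le> 0"
        using lower_env_UNIV_le[where g=g and m=0, OF nonneg lam_pos, of y y] vanishes by simp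
      moreover have "0 \<le> lam * (norm (y - x))\<^sup>2" using lam_pos by simp
      ultimately show ?thesis
        using lower_env_UNIV_ge[where g=g and m=0, OF nonneg lam_pos, of x] by simp
    qed
    have "\<exists>w\<in>closure \<Omega>. ?t y \<le> ?t w" for y
    proof (cases "y \<in> closure \<Omega>")
      case False
      show ?thesis using dominated[OF False] x by (intro bexI[of _ x]) simp_all
    qed auto
    then show "(SUP y. ?t y) \<le> (SUP y\<in>closure \<Omega>. ?t y)"
      by (intro cSUP_mono bdd) auto
  qed
  ultimately show ?thesis unfolding lower_comp_dom_def upper_env_def closure_UNIV by simp
qed

end

lemma INF_le_closure_point:
  fixes g :: "'a::topological_space \<Rightarrow> real"
  assumes "continuous_on UNIV g" "S \<noteq> {}" "bdd_below (g ` S)" "w \<in> closure S"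
  shows "(INF y\<in>S. g y) \<le> g w"
proof -
  have "S \<subseteq> {u. (INF y\<in>S. g y) \<le> g u}" using cINF_lower[OF assms(3)] by auto
  moreover have "closed {u. (INF y\<in>S. g y) \<le> g u}"
    using assms(1) by (intro closed_Collect_le continuous_intros) auto
  ultimately have "closure S \<subseteq> {u. (INF y\<in>S. g y) \<le> g u}" by (rule closure_minimal)
  with assms(4) show ?thesis by auto
qed

lemma INF_vanishing_off_bounded_open_eq_0:
  fixes g :: "'a::euclidean_space \<Rightarrow> real"
  assumes "open \<Omega>" "bounded \<Omega>" "\<Omega> \<noteq> {}" "continuous_on UNIV g"
    and nonneg: "\<And>z. 0 \<le> g z" and vanishes: "\<And>z. z \<notin> \<Omega> \<Longrightarrow> g z = 0"
  shows "(INF y\<in>\<Omega>. g y) = 0"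
proof (rule antisym)
  have "\<Omega> \<noteq> UNIV" using \<open>bounded \<Omega>\<close> not_bounded_UNIV by auto
  with \<open>\<Omega> \<noteq> {}\<close> obtain w where "w \<in> frontier \<Omega>" using frontier_eq_empty by blast
  with \<open>open \<Omega>\<close> have w: "w \<in> closure \<Omega>" "w \<notin> \<Omega>" by (auto simp: frontier_def interior_open)
  have "(INF y\<in>\<Omega>. g y) \<le> g w"
    using assms(3,4) w(1) nonneg by (intro INF_le_closure_point bdd_belowI2[of _ 0])
  with vanishes[OF w(2)] show "(INF y\<in>\<Omega>. g y) \<le> 0" by simp
  show "0 \<le> (INF y\<in>\<Omega>. g y)" using nonneg \<open>\<Omega> \<noteq> {}\<close> by (intro cINF_greatest) auto
qed

theorem corollary3p5:
  fixes \<Omega> A :: "'a::euclidean_space set" and lam :: real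
  assumes "open \<Omega>" and "bounded \<Omega>"
    and "open A" and "A \<noteq> {}" and "A \<subseteq> \<Omega>"
    and "lam > 0"
  defines "f \<equiv> dist2 (- A)"
  defines "fm \<equiv> (\<lambda>x. if x \<in> \<Omega> then f x else (INF y \<in> \<Omega>. f y))"
  shows "\<forall>x \<in> closure \<Omega>.
           Mtrans lam (- A) x = (1 + lam) * (fm x - lower_comp_dom lam \<Omega> fm x)"
proof -
  have nonneg: "\<And>z. 0 \<le> f z" and off_\<Omega>: "\<And>z. z \<notin> \<Omega> \<Longrightarrow> f z = 0"
    using \<open>A \<subseteq> \<Omega>\<close> unfolding f_def dist2_def by (auto intro: infdist_zero)
  have "continuous_on UNIV f" unfolding f_def dist2_def[abs_def] by (intro continuous_intros)
  with assms(1,2,4,5) have "(INF y\<in>\<Omega>. f y) = 0"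
    by (intro INF_vanishing_off_bounded_open_eq_0 nonneg off_\<Omega>) auto
  then have "fm = f" unfolding fm_def using off_\<Omega> by (auto simp: fun_eq_iff)
  moreover have "lower_comp_dom lam \<Omega> f x = lower_comp lam f x" if "x \<in> closure \<Omega>" for x
    using lower_comp_dom_closure_eq_UNIV[where g=f, OF nonneg \<open>lam > 0\<close> \<open>open \<Omega>\<close> off_\<Omega> that]
      lower_comp_eq_lower_comp_dom_UNIV[where g=f and m=0, OF nonneg \<open>lam > 0\<close>] by simp
  ultimately show ?thesis unfolding Mtrans_def f_def by simp
qed

end
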